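(* In the two-type heterogeneous SIS model described in the context, with $x_i=\lambda_i\widetilde d_i$ for $i=1,2$: (1) if $x_1>1$ and $x_2>1$, then diffusion occurs from a small seed for every $\pi\in(0,1)$; (2) if $x_1\le 1$ and $x_2\le 1$, then diffusion does not occur from a small seed for any $\pi\in(0,1)$; (3) if $x_1>1$ and $x_2\le 1$ (or $x_2>1$ and $x_1\le1$), then there exists $\pi^*\in(0,1)$ such that diffusion occurs from a small seed for every $\pi\in(\pi^*,1)$.
   Context: There are two types of agents, $i\in\{1,2\}$. For each type $i$, $P_i$ is a probability distribution on the nonnegative integers (degree distribution), with mean $\langle d\rangle_i=\sum_d P_i(d)d>0$ and finite second moment $\langle d^2\rangle_i=\sum_dP_i(d)d^2$; let $\widetilde d_i=\langle d^2\rangle_i/\langle d\rangle_i$. Each meeting of a type-$i$ agent is with its own type with probability $\pi\in(0,1)$ and with the other type with probability $1-\pi$. In the SIS process a susceptible type-$i$ agent becomes infected at rate $\nu_i>0$ per infected agent met, infected type-$i$ agents recover at rate $\delta_i>0$, $\lambda_i=\nu_i/\delta_i$, and meetings are biased proportionally to degree. Let $x_i=\lambda_i\widetilde d_i$ and $$A=\begin{pmatrix}\pi x_1 & (1-\pi)x_2\\ (1-\pi)x_1 & \pi x_2\end{pmatrix}.$$ Diffusion occurs from a small seed means: for every $\varepsilon>0$ there exists $v\in\mathbb{R}^2$ with $0<v_i<\varepsilon$ and $(Av)_i>v_i$ for $i=1,2$. (The condition $x_i>1$ is the condition for diffusion within type $i$ when isolated, i.e. at $\pi=1$.) *)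

theory Defs
  imports "HOL-Analysis.Analysis"
begin

definition is_degree_dist :: "(nat \<Rightarrow> real) \<Rightarrow> bool" where
  "is_degree_dist P \<longleftrightarrow> (\<forall>d. 0 \<le> P d) \<and> P sums 1
      \<and> summable (\<lambda>d. P d * (real d)^2)"

definition mean_deg :: "(nat \<Rightarrow> real) \<Rightarrow> real" where
  "mean_deg P = (\<Sum>d. P d * real d)"

definition second_moment :: "(nat \<Rightarrow> real) \<Rightarrow> real" where
  "second_moment P = (\<Sum>d. P d * (real d)^2)"

definition dtilde :: "(nat \<Rightarrow> real) \<Rightarrow> real" where
  "dtilde P = second_moment P / mean_deg P"

definition Amat :: "real \<Rightarrow> real \<Rightarrow> real \<Rightarrow> real^2^2" where
  "Amat p x1 x2 = (\<chi> i j. if i = 1 then (if j = 1 then p * x1 else (1 - p) * x2)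
                            else (if j = 1 then (1 - p) * x1 else p * x2))"

definition diffusion_small_seed :: "real \<Rightarrow> real \<Rightarrow> real \<Rightarrow> bool" where
  "diffusion_small_seed p x1 x2 \<longleftrightarrow>
     (\<forall>\<epsilon>>0. \<exists>v::real^2. (\<forall>i. 0 < v $ i \<and> v $ i < \<epsilon>)
        \<and> (\<forall>i. (Amat p x1 x2 *v v) $ i > v $ i))"

end

theory Submission
  imports Defs
begin

text \<open>Diffusion from a small seed only needs some positive vector v with A v > v: the condition
  is invariant under positive scaling, so v can be shrunk below any threshold. If both types are
  supercritical, v = (1, 1) works; if both are subcritical, summing the two inequalities
  contradicts x1 v1 + x2 v2 \<le> v1 + v2, since the columns of A sum to x1 and x2. If only type 1
  is supercritical and \<pi> x1 > 1, a seed concentrated on type 1, with a small type-2 component,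
  grows; the remaining case follows by exchanging the types.\<close>

lemma shrink_positive_supersolution:
  fixes M :: "real^'n^'n" and v :: "real^'n"
  assumes pos: "\<forall>i. 0 < v $ i" and grow: "\<forall>i. v $ i < (M *v v) $ i" and "\<epsilon> > 0"
  obtains w where "\<forall>i. 0 < w $ i \<and> w $ i < \<epsilon>" and "\<forall>i. w $ i < (M *v w) $ i"
proof
  define s where "s = (\<Sum>i\<in>UNIV. v $ i)"
  have v_le_s: "v $ i \<le> s" for i
    unfolding s_def using pos by (intro member_le_sum) (auto intro: less_imp_le)
  then have "s > 0" using pos by (meson less_le_trans)
  define t where "t = \<epsilon> / (2 * s)"
  have "t > 0" using \<open>s > 0\<close> \<open>\<epsilon> > 0\<close> by (simp add: t_def)
  have "t * s < \<epsilon>" using \<open>s > 0\<close> \<open>\<epsilon> > 0\<close> by (simp add: t_def)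
  have "t * v $ i < \<epsilon>" for i
    using mult_left_mono[OF v_le_s, of t i] \<open>t > 0\<close> \<open>t * s < \<epsilon>\<close> by linarith
  then show "\<forall>i. 0 < (t *\<^sub>R v) $ i \<and> (t *\<^sub>R v) $ i < \<epsilon>"
    using pos \<open>t > 0\<close> by simp
  show "\<forall>i. (t *\<^sub>R v) $ i < (M *v (t *\<^sub>R v)) $ i"
    using grow \<open>t > 0\<close> by (simp add: matrix_vector_mult_scaleR)
qed

lemma diffusion_small_seed_iff:
  "diffusion_small_seed p x1 x2 \<longleftrightarrow>
     (\<exists>v::real^2. (\<forall>i. 0 < v $ i) \<and> (\<forall>i. v $ i < (Amat p x1 x2 *v v) $ i))"
proof
  assume "diffusion_small_seed p x1 x2"
  then show "\<exists>v::real^2. (\<forall>i. 0 < v $ i) \<and> (\<forall>i. v $ i < (Amat p x1 x2 *v v) $ i)"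
    unfolding diffusion_small_seed_def by (metis zero_less_one)
next
  assume "\<exists>v::real^2. (\<forall>i. 0 < v $ i) \<and> (\<forall>i. v $ i < (Amat p x1 x2 *v v) $ i)"
  then show "diffusion_small_seed p x1 x2"
    unfolding diffusion_small_seed_def
    by (metis shrink_positive_supersolution)
qed

lemma Amat_mult_vec_nth:
  "(Amat p x1 x2 *v v) $ 1 = p * x1 * v $ 1 + (1 - p) * x2 * v $ 2"
  "(Amat p x1 x2 *v v) $ 2 = (1 - p) * x1 * v $ 1 + p * x2 * v $ 2"
  by (simp_all add: Amat_def matrix_vector_mult_def sum_2)

lemma diffusion_small_seed_iff_pair:
  "diffusion_small_seed p x1 x2 \<longleftrightarrow>
     (\<exists>a b. 0 < a \<and> 0 < b \<and> a < p * x1 * a + (1 - p) * x2 * b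
                         \<and> b < (1 - p) * x1 * a + p * x2 * b)"
  unfolding diffusion_small_seed_iff forall_2 Amat_mult_vec_nth
  by (metis vector_2)

lemma diffusion_small_seed_commute:
  "diffusion_small_seed p x1 x2 \<longleftrightarrow> diffusion_small_seed p x2 x1"
  unfolding diffusion_small_seed_iff_pair by (metis mult.commute add.commute)

lemma diffusion_if_both_supercritical:
  assumes "1 < x1" "1 < x2" "0 < p" "p < 1"
  shows "diffusion_small_seed p x1 x2"
proof -
  have "p * 1 + (1 - p) * 1 < p * x1 + (1 - p) * x2"
    using assms by (intro add_strict_mono mult_strict_left_mono) auto
  moreover have "(1 - p) * 1 + p * 1 < (1 - p) * x1 + p * x2"
    using assms by (intro add_strict_mono mult_strict_left_mono) auto
  ultimately show ?thesis
    unfolding diffusion_small_seed_iff_pair by (intro exI[of _ 1]) auto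
qed

lemma no_diffusion_if_both_subcritical:
  assumes "x1 \<le> 1" "x2 \<le> 1"
  shows "\<not> diffusion_small_seed p x1 x2"
proof
  assume "diffusion_small_seed p x1 x2"
  then obtain a b where "0 < a" "0 < b"
    and grow: "a < p * x1 * a + (1 - p) * x2 * b" "b < (1 - p) * x1 * a + p * x2 * b"
    unfolding diffusion_small_seed_iff_pair by blast
  have "x1 * a \<le> a" "x2 * b \<le> b"
    using assms \<open>0 < a\<close> \<open>0 < b\<close> by (simp_all add: mult_le_cancel_right1)
  moreover have "p * x1 * a + (1 - p) * x2 * b + ((1 - p) * x1 * a + p * x2 * b)
                   = x1 * a + x2 * b"
    by (simp add: algebra_simps)
  ultimately show False using grow by linarith
qed

lemma diffusion_if_homophilous_supercritical:
  assumes "1 < x1" "0 \<le> x2" "1 / x1 < p" "p < 1"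
  shows "diffusion_small_seed p x1 x2"
proof -
  have "1 < p * x1" using assms by (simp add: field_simps)
  define b where "b = (1 - p) * x1 / 2"
  have "0 < b" using assms by (simp add: b_def)
  have "0 < 1 / x1" using assms(1) by simp
  then have "0 \<le> p" using assms(3) by linarith
  have "0 \<le> (1 - p) * x2 * b" "0 \<le> p * x2 * b" using \<open>0 < b\<close> \<open>0 \<le> p\<close> assms by simp_all
  moreover have "(1 - p) * x1 * 1 = 2 * b" by (simp add: b_def)
  ultimately have "1 < p * x1 * 1 + (1 - p) * x2 * b" "b < (1 - p) * x1 * 1 + p * x2 * b"
    using \<open>1 < p * x1\<close> \<open>0 < b\<close> by linarith+
  then show ?thesis
    unfolding diffusion_small_seed_iff_pair using \<open>0 < b\<close> by (intro exI[of _ 1] exI[of _ b]) auto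
qed

lemma dtilde_nonneg:
  assumes "is_degree_dist P" "mean_deg P > 0"
  shows "dtilde P \<ge> 0"
proof -
  have "second_moment P \<ge> 0"
    using assms(1) unfolding is_degree_dist_def second_moment_def
    by (intro suminf_nonneg) auto
  then show ?thesis using assms(2) unfolding dtilde_def by simp
qed

theorem corollary1:
  fixes P1 P2 :: "nat \<Rightarrow> real" and \<nu>1 \<nu>2 \<delta>1 \<delta>2 x1 x2 :: real
  assumes "is_degree_dist P1" and "is_degree_dist P2"
    and "mean_deg P1 > 0" and "mean_deg P2 > 0"
    and "\<nu>1 > 0" and "\<nu>2 > 0" and "\<delta>1 > 0" and "\<delta>2 > 0"
    and "x1 = (\<nu>1 / \<delta>1) * dtilde P1" and "x2 = (\<nu>2 / \<delta>2) * dtilde P2"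
  shows "(x1 > 1 \<and> x2 > 1 \<longrightarrow> (\<forall>\<pi>\<in>{0<..<1}. diffusion_small_seed \<pi> x1 x2))
       \<and> (x1 \<le> 1 \<and> x2 \<le> 1 \<longrightarrow> (\<forall>\<pi>\<in>{0<..<1}. \<not> diffusion_small_seed \<pi> x1 x2))
       \<and> ((x1 > 1 \<and> x2 \<le> 1) \<or> (x2 > 1 \<and> x1 \<le> 1) \<longrightarrow>
            (\<exists>\<pi>s\<in>{0<..<1}. \<forall>\<pi>\<in>{\<pi>s<..<1}. diffusion_small_seed \<pi> x1 x2))"
proof -
  have "0 \<le> x1" "0 \<le> x2" using assms dtilde_nonneg by simp_all
  have one_sided: "\<exists>\<pi>s\<in>{0<..<1}. \<forall>\<pi>\<in>{\<pi>s<..<1}. diffusion_small_seed \<pi> y1 y2"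
    if "1 < y1" "0 \<le> y2" for y1 y2
    using that diffusion_if_homophilous_supercritical by (intro bexI[of _ "1 / y1"]) auto
  show ?thesis
    using diffusion_if_both_supercritical no_diffusion_if_both_subcritical
      one_sided[of x1 x2] one_sided[of x2 x1] \<open>0 \<le> x1\<close> \<open>0 \<le> x2\<close>
      diffusion_small_seed_commute
    by auto
qed

end
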